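(* Let $\lambda\in\mathbb{C}$ with $|\lambda|>1$, and let $g,h\in \mathrm{SL}(2,\mathbb{C})$ be $$g=\begin{pmatrix}\lambda&0\\0&\lambda^{-1}\end{pmatrix},\qquad h=\begin{pmatrix}a&b\\c&d\end{pmatrix}.$$ Put $M_g=|\lambda-1|+|\lambda^{-1}-1|$ and suppose $M_g<1$. If the subgroup $\langle g,h\rangle$ is discrete and non-elementary, then $$|abcd|^{1/2}\neq \frac{1-M_g}{M_g^2}.$$
   Context: A subgroup of $\mathrm{SL}(2,\mathbb{C})$ is discrete if it is discrete in the matrix topology. It is elementary if its action on $\mathbb{H}^3\cup\partial\mathbb{H}^3$ (via Möbius transformations) has a finite orbit; otherwise it is non-elementary. Since $|\lambda|>1$, $g$ is loxodromic. *)

theory Defs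
  imports "HOL-Analysis.Analysis"
begin

type_synonym cmat2 = "complex^2^2"

definition mat2 :: "complex \<Rightarrow> complex \<Rightarrow> complex \<Rightarrow> complex \<Rightarrow> cmat2" where
  "mat2 a b c d = (\<chi> i j. if i = 1 then (if j = 1 then a else b) else (if j = 1 then c else d))"

definition SL2C :: "cmat2 set" where
  "SL2C = {A. det A = 1}"

inductive_set gen_subgroup :: "cmat2 set \<Rightarrow> cmat2 set" for S where
  gen_one: "mat 1 \<in> gen_subgroup S"
| gen_base: "A \<in> S \<Longrightarrow> A \<in> gen_subgroup S"
| gen_mult: "A \<in> gen_subgroup S \<Longrightarrow> B \<in> gen_subgroup S \<Longrightarrow> A ** B \<in> gen_subgroup S"
| gen_inv: "A \<in> gen_subgroup S \<Longrightarrow> matrix_inv A \<in> gen_subgroup S"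

definition discrete_group :: "cmat2 set \<Rightarrow> bool" where
  "discrete_group G \<longleftrightarrow> (\<forall>A\<in>G. \<exists>e>0. \<forall>B\<in>G. dist B A < e \<longrightarrow> B = A)"

text \<open>Points of the closed upper half-space model of H^3 \<union> \<partial>H^3:
  HPt z t with t > 0 is an interior point, HPt z 0 is the boundary point z \<in> C,
  HInf is the boundary point \<infinity>.\<close>
datatype hpoint = HInf | HPt complex real

definition hspace :: "hpoint set" where
  "hspace = insert HInf {HPt z t | z t. t \<ge> 0}"

text \<open>Action of a matrix [[a,b],[c,d]] by the Poincare extension of the Moebius map.\<close>
fun mobius_act :: "cmat2 \<Rightarrow> hpoint \<Rightarrow> hpoint" where
  "mobius_act A HInf =
     (let a = A$1$1; c = A$2$1 in if c = 0 then HInf else HPt (a / c) 0)"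
| "mobius_act A (HPt z t) =
     (let a = A$1$1; b = A$1$2; c = A$2$1; d = A$2$2;
          D = (cmod (c*z + d))\<^sup>2 + (cmod c)\<^sup>2 * t\<^sup>2 in
      if D = 0 then HInf
      else HPt (((a*z + b) * cnj (c*z + d) + a * cnj c * complex_of_real (t\<^sup>2)) / complex_of_real D)
               (t / D))"

definition elementary :: "cmat2 set \<Rightarrow> bool" where
  "elementary G \<longleftrightarrow> (\<exists>x\<in>hspace. finite ((\<lambda>A. mobius_act A x) ` G))"

end

theory Submission
  imports Defs
begin

text \<open>
  Put h(0) = h and h(n+1) = h(n) g h(n)^-1, and let mu = lam - 1/lam. If Y(n) is the
  product of the four entries of h(n), then z(n) = Y(n) mu^2 follows the logistic map
  z \<mapsto> -mu^2 z (1 - z), and the product of the off-diagonal entries of h(n+1) is -z(n).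
  When |mu|^2 (1 + |abcd| |mu|^2) < 1 these products therefore decay geometrically, the
  diagonal of h(n) tends to that of g, and the off-diagonal entries grow at most like
  (|lam| |mu|)^n and (|mu|/|lam|)^n. Conjugating h(2n+1) by g^-n cancels this growth and
  yields elements of the group converging geometrically to g, so the group is not
  discrete. If instead some Y(N) vanishes, the orbit reaches a triangular matrix with
  diagonal (1/lam, lam), whose conjugates by powers of g accumulate at g^-1.

  With M = |lam - 1| + |1/lam - 1| we have |mu| \<le> M, and the hypothesis
  |abcd|^(1/2) = (1 - M)/M^2 gives |mu|^2 + |abcd| |mu|^4 \<le> M^2 + (1 - M)^2 < 1.
\<close>

lemma logistic_iteration_decay:
  fixes u :: "nat \<Rightarrow> complex"
  assumes u_Suc: "\<And>n. u (Suc n) = - w * u n * (1 - u n)"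
    and small: "cmod w * (1 + cmod (u 0)) \<le> 1"
  shows "cmod (u n) \<le> cmod (u 0) * (cmod w * (1 + cmod (u 0)))^n"
proof (induction n)
  case 0
  then show ?case by simp
next
  case (Suc n)
  define q where "q = cmod w * (1 + cmod (u 0))"
  have "q^n \<le> 1"
    using small by (simp add: q_def power_le_one)
  then have "cmod (u n) \<le> cmod (u 0)"
    using Suc by (simp add: q_def) (meson mult_left_le norm_ge_zero order_trans)
  have "cmod (u (Suc n)) \<le> cmod w * cmod (u n) * (1 + cmod (u n))"
    using norm_triangle_ineq4[of 1 "u n"] by (simp add: u_Suc norm_mult mult_left_mono)
  also have "\<dots> \<le> cmod w * (cmod (u 0) * q^n) * (1 + cmod (u 0))"
    using Suc \<open>cmod (u n) \<le> cmod (u 0)\<close>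
    by (intro mult_mono mult_left_mono) (simp_all add: q_def)
  also have "\<dots> = cmod (u 0) * q ^ Suc n"
    by (simp add: q_def)
  finally show ?case by (simp add: q_def)
qed

lemma norm_le_power_mult_exp_sum:
  fixes u :: "nat \<Rightarrow> 'a::real_normed_vector"
  assumes "\<rho> \<ge> 0" "\<And>n. norm (u (Suc n)) \<le> \<rho> * exp (e n) * norm (u n)"
  shows "norm (u n) \<le> norm (u 0) * \<rho>^n * exp (\<Sum>k<n. e k)"
proof (induction n)
  case 0
  then show ?case by simp
next
  case (Suc n)
  have "norm (u (Suc n)) \<le> \<rho> * exp (e n) * (norm (u 0) * \<rho>^n * exp (\<Sum>k<n. e k))"
    using assms Suc by (meson mult_left_mono order_trans exp_ge_zero zero_le_mult_iff)
  then show ?case by (simp add: exp_add algebra_simps)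
qed

lemma mat2_nth [simp]:
  "mat2 a b c d $1$1 = a" "mat2 a b c d $1$2 = b" "mat2 a b c d $2$1 = c" "mat2 a b c d $2$2 = d"
  by (simp_all add: mat2_def)

lemma mat2_eta: "A = mat2 (A$1$1) (A$1$2) (A$2$1) (A$2$2)"
  by (simp add: vec_eq_iff forall_2)

lemma mat2_eq_iff: "mat2 a b c d = mat2 a' b' c' d' \<longleftrightarrow> a = a' \<and> b = b' \<and> c = c' \<and> d = d'"
  by (metis mat2_nth)

lemma mat2_mult:
  "mat2 a b c d ** mat2 e f g h = mat2 (a*e + b*g) (a*f + b*h) (c*e + d*g) (c*f + d*h)"
  by (simp add: vec_eq_iff forall_2 matrix_matrix_mult_def sum_2 mat2_def)

lemma mat_1_eq_mat2: "mat 1 = mat2 1 0 0 1"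
  by (simp add: vec_eq_iff forall_2 mat_def mat2_def)

lemma det_mat2: "det (mat2 a b c d) = a*d - b*c"
  by (simp add: det_2)

lemma matrix_inv_eqI:
  fixes A B :: "'a::comm_ring_1^'n^'n"
  assumes "A ** B = mat 1" "B ** A = mat 1"
  shows "matrix_inv A = B"
proof -
  define C where "C = matrix_inv A"
  have "\<exists>A'. A ** A' = mat 1 \<and> A' ** A = mat 1"
    using assms by blast
  then have C: "C ** A = mat 1"
    using someI_ex unfolding C_def matrix_inv_def by (metis (mono_tags, lifting))
  have "C = C ** (A ** B)" by (simp add: assms)
  also have "\<dots> = B" by (simp add: matrix_mul_assoc C)
  finally show ?thesis unfolding C_def .
qed

lemma matrix_inv_mat2:
  assumes "a*d - b*c = 1"
  shows "matrix_inv (mat2 a b c d) = mat2 d (-b) (-c) a"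
  using assms
  by (intro matrix_inv_eqI) (simp_all add: mat2_mult mat_1_eq_mat2 mat2_eq_iff algebra_simps)

lemma dist_mat2_le:
  "dist (mat2 a b c d) (mat2 a' b' c' d') \<le> cmod (a - a') + cmod (b - b') + cmod (c - c') + cmod (d - d')"
proof -
  have norm_vec2: "norm x \<le> norm (x$1) + norm (x$2)" for x :: "'b::real_normed_vector^2"
    unfolding norm_vec_def by (rule order_trans[OF L2_set_le_sum]) (auto simp: sum_2)
  let ?E = "mat2 a b c d - mat2 a' b' c' d'"
  have "dist (mat2 a b c d) (mat2 a' b' c' d') \<le> norm (?E$1) + norm (?E$2)"
    unfolding dist_norm by (rule norm_vec2)
  also have "\<dots> \<le> (cmod (a - a') + cmod (b - b')) + (cmod (c - c') + cmod (d - d'))"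
    by (rule add_mono; rule order_trans[OF norm_vec2]; simp)
  finally show ?thesis by simp
qed

lemma discrete_group_no_geometric_approach:
  assumes "discrete_group G" "P \<in> G" "\<And>n. S n \<in> G" "\<And>n. S n \<noteq> P"
    and "\<And>n. dist (S n) P \<le> K * r^n" "r < 1"
  shows False
proof -
  obtain e where "e > 0" and isolated: "\<And>B. B \<in> G \<Longrightarrow> dist B P < e \<Longrightarrow> B = P"
    using assms(1,2) unfolding discrete_group_def by blast
  obtain n where "K * r^n < e"
  proof (cases "K \<le> 0")
    case True
    then show ?thesis using that[of 0] \<open>e > 0\<close> by simp
  next
    case False
    then obtain n where "r^n < e/K"
      using real_arch_pow_inv[of "e/K" r] \<open>e > 0\<close> \<open>r < 1\<close> by auto
    then show ?thesis using that[of n] False by (simp add: field_simps)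
  qed
  then show False
    using isolated[OF assms(3)] assms(4,5)[of n] by fastforce
qed

definition diag2 :: "complex \<Rightarrow> cmat2" where
  "diag2 p = mat2 p 0 0 (inverse p)"

lemma diag2_power_in_gen_subgroup:
  assumes "diag2 p \<in> gen_subgroup S"
  shows "diag2 (p^n) \<in> gen_subgroup S"
proof (induction n)
  case 0
  then show ?case by (simp add: diag2_def mat_1_eq_mat2[symmetric] gen_one)
next
  case (Suc n)
  have "diag2 (p^Suc n) = diag2 (p^n) ** diag2 p"
    by (simp add: diag2_def mat2_mult mult.commute)
  then show ?case using gen_mult[OF Suc assms] by simp
qed

lemma matrix_inv_diag2: "p \<noteq> 0 \<Longrightarrow> matrix_inv (diag2 p) = diag2 (inverse p)"
  by (simp add: diag2_def matrix_inv_mat2)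

lemma diag2_conj:
  assumes "p \<noteq> 0"
  shows "diag2 p ** X ** diag2 (inverse p) = mat2 (X$1$1) (p^2 * X$1$2) (X$2$1 * inverse p^2) (X$2$2)"
proof -
  obtain a b c d where "X = mat2 a b c d" by (metis mat2_eta)
  with assms show ?thesis
    by (simp add: diag2_def mat2_mult mat2_eq_iff power2_eq_square field_simps)
qed

lemma diag2_power_conj_in_gen_subgroup:
  assumes "diag2 p \<in> gen_subgroup S" "p \<noteq> 0" "A \<in> gen_subgroup S"
  shows "diag2 (p^n) ** A ** diag2 (inverse p ^ n) \<in> gen_subgroup S"
proof -
  have "diag2 (inverse p ^ n) = matrix_inv (diag2 (p^n))"
    using assms(2) by (simp add: matrix_inv_diag2 power_inverse)
  then show ?thesis
    using diag2_power_in_gen_subgroup[OF assms(1)] assms(3) by (metis gen_mult gen_inv)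
qed

lemma discrete_triangular_is_diagonal:
  assumes disc: "discrete_group (gen_subgroup S)" and p: "cmod p > 1"
    and gen: "diag2 p \<in> gen_subgroup S" and T: "mat2 (inverse p) b c p \<in> gen_subgroup S"
    and "b * c = 0"
  shows "b = 0 \<and> c = 0"
proof (rule ccontr)
  assume nondiag: "\<not> (b = 0 \<and> c = 0)"
  have p0: "p \<noteq> 0" using p by auto
  have contr: "1 / (cmod p)^2 < 1"
    using p by (simp add: divide_less_eq power2_eq_square less_1_mult)
  have gen': "diag2 (inverse p) \<in> gen_subgroup S"
    using gen_inv[OF gen] by (simp add: matrix_inv_diag2 p0)
  have limit: "diag2 (inverse p) = mat2 (inverse p) 0 0 p"
    by (simp add: diag2_def)
  show False
  proof (cases "c = 0")
    case True
    define U where "U n = diag2 (inverse p ^ n) ** mat2 (inverse p) b c p ** diag2 (p ^ n)" for n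
    have U: "U n = mat2 (inverse p) ((inverse p ^ n)^2 * b) 0 p" for n
      using diag2_conj[of "inverse p ^ n"] p0 True by (simp add: U_def power_inverse)
    have "U n \<in> gen_subgroup S" for n
      using diag2_power_conj_in_gen_subgroup[OF gen' _ T] p0 by (simp add: U_def)
    moreover have "U n \<noteq> diag2 (inverse p)" for n
      using nondiag True p0 by (simp add: U limit mat2_eq_iff)
    moreover have "dist (U n) (diag2 (inverse p)) \<le> cmod b * (1 / (cmod p)^2)^n" for n
      using dist_mat2_le[of "inverse p" "(inverse p ^ n)^2 * b" 0 p "inverse p" 0 0 p]
      unfolding U limit by (simp add: norm_mult norm_power norm_inverse power_one_over
          power_mult[symmetric] mult.commute divide_inverse power_inverse)
    ultimately show False
      using discrete_group_no_geometric_approach[OF disc gen'] contr by blast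
  next
    case False
    then have "b = 0" using \<open>b * c = 0\<close> by simp
    define U where "U n = diag2 (p ^ n) ** mat2 (inverse p) b c p ** diag2 (inverse p ^ n)" for n
    have U: "U n = mat2 (inverse p) 0 (c * inverse (p ^ n)^2) p" for n
      using diag2_conj[of "p ^ n"] p0 \<open>b = 0\<close> by (simp add: U_def power_inverse)
    have "U n \<in> gen_subgroup S" for n
      using diag2_power_conj_in_gen_subgroup[OF gen p0 T] by (simp add: U_def)
    moreover have "U n \<noteq> diag2 (inverse p)" for n
      using False p0 by (simp add: U limit mat2_eq_iff)
    moreover have "dist (U n) (diag2 (inverse p)) \<le> cmod c * (1 / (cmod p)^2)^n" for n
      using dist_mat2_le[of "inverse p" 0 "c * inverse (p ^ n)^2" p "inverse p" 0 0 p]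
      unfolding U limit by (simp add: norm_mult norm_power norm_inverse power_one_over
          power_mult[symmetric] mult.commute divide_inverse power_inverse)
    ultimately show False
      using discrete_group_no_geometric_approach[OF disc gen'] contr by blast
  qed
qed

primrec conj_orbit :: "cmat2 \<Rightarrow> cmat2 \<Rightarrow> nat \<Rightarrow> cmat2" where
  "conj_orbit g h 0 = h"
| "conj_orbit g h (Suc n) = conj_orbit g h n ** g ** matrix_inv (conj_orbit g h n)"

lemma conj_orbit_in_gen_subgroup:
  "g \<in> gen_subgroup S \<Longrightarrow> h \<in> gen_subgroup S \<Longrightarrow> conj_orbit g h n \<in> gen_subgroup S"
  by (induction n) (auto intro: gen_mult gen_inv)

lemma conj_diag2:
  assumes "det A = 1" "l \<noteq> 0"
  shows "A ** diag2 l ** matrix_inv A =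
    mat2 (l + A$1$2 * A$2$1 * (l - inverse l)) (- A$1$1 * A$1$2 * (l - inverse l))
         (A$2$1 * A$2$2 * (l - inverse l)) (inverse l - A$1$2 * A$2$1 * (l - inverse l))"
proof -
  obtain a b c d where A: "A = mat2 a b c d" by (metis mat2_eta)
  then have det: "a*d - b*c = 1" using assms(1) by (simp add: det_mat2)
  then have "a*d = 1 + b*c" by algebra
  with assms(2) show ?thesis
    unfolding A by (simp add: matrix_inv_mat2[OF det] diag2_def mat2_mult mat2_eq_iff field_simps) algebra
qed

locale conj_orbit_entries =
  fixes lam mu :: complex and A B C D :: "nat \<Rightarrow> complex"
  assumes lam_gt_1: "cmod lam > 1"
    and mu_eq: "mu = lam - inverse lam"
    and det_entries: "A n * D n - B n * C n = 1"
    and A_Suc: "A (Suc n) = lam + B n * C n * mu"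
    and B_Suc: "B (Suc n) = - A n * B n * mu"
    and C_Suc: "C (Suc n) = C n * D n * mu"
    and D_Suc: "D (Suc n) = inverse lam - B n * C n * mu"

lemma conj_orbit_entries_diag2:
  assumes "cmod lam > 1" "det h = 1"
  defines "H \<equiv> conj_orbit (diag2 lam) h"
  shows "conj_orbit_entries lam (lam - inverse lam)
           (\<lambda>n. H n $1$1) (\<lambda>n. H n $1$2) (\<lambda>n. H n $2$1) (\<lambda>n. H n $2$2)"
proof -
  have lam0: "lam \<noteq> 0" using assms(1) by auto
  have det: "det (H n) = 1" for n
  proof (induction n)
    case 0
    then show ?case using assms(2) by (simp add: H_def)
  next
    case (Suc n)
    have "det (H n) = H n$1$1 * H n$2$2 - H n$1$2 * H n$2$1"
      by (subst mat2_eta) (simp add: det_mat2)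
    with Suc lam0 show ?case
      by (simp add: H_def conj_diag2 det_mat2 field_simps) algebra
  qed
  show ?thesis
    by unfold_locales (simp_all add: assms(1) H_def conj_diag2 det[unfolded H_def] lam0
        flip: det_mat2 mat2_eta)
qed

context conj_orbit_entries
begin

definition entry_product :: "nat \<Rightarrow> complex" where
  "entry_product n = A n * B n * C n * D n"

definition rate :: real where
  "rate = cmod (mu^2) * (1 + cmod (entry_product 0 * mu^2))"

lemma lam_nonzero: "lam \<noteq> 0"
  using lam_gt_1 by auto

lemma lam_mult_self_ne: "lam * lam \<noteq> 1" "lam * lam \<noteq> -1"
proof -
  have "cmod (lam * lam) > 1"
    using lam_gt_1 by (simp add: norm_mult less_1_mult)
  then show "lam * lam \<noteq> 1" "lam * lam \<noteq> -1" by auto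
qed

lemma mu_nonzero: "mu \<noteq> 0"
  using lam_mult_self_ne lam_nonzero by (auto simp: mu_eq field_simps)

lemma trace_nonzero: "lam + inverse lam \<noteq> 0"
  using lam_mult_self_ne lam_nonzero by (auto simp: field_simps eq_neg_iff_add_eq_0)

lemma BC_Suc: "B (Suc n) * C (Suc n) = - entry_product n * mu^2"
  by (simp add: entry_product_def B_Suc C_Suc power2_eq_square algebra_simps)

lemma entry_product_eq: "entry_product n = B n * C n * (1 + B n * C n)"
proof -
  have "entry_product n = (A n * D n) * (B n * C n)"
    by (simp add: entry_product_def algebra_simps)
  also have "\<dots> = (1 + B n * C n) * (B n * C n)"
    using det_entries[of n] by (simp add: algebra_simps)
  finally show ?thesis by (simp add: algebra_simps)
qed

lemma orbit_becomes_triangular: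
  assumes "entry_product 0 \<noteq> 0" "entry_product N = 0"
  shows "\<exists>k. A k = inverse lam \<and> D k = lam \<and> B k * C k = 0 \<and> \<not> (B k = 0 \<and> C k = 0)"
proof -
  obtain n where n: "entry_product n \<noteq> 0" "entry_product (Suc n) = 0"
  proof (rule ccontr)
    assume "\<not> thesis"
    then have "entry_product n \<noteq> 0" for n
      using that assms(1) by (induction n) auto
    then show False using assms(2) by blast
  qed
  have "B (Suc n) * C (Suc n) \<noteq> 0"
    using n(1) BC_Suc[of n] mu_nonzero by simp
  then have BC1: "B (Suc n) * C (Suc n) = -1"
    using n(2) entry_product_eq[of "Suc n"] by (simp add: add_eq_0_iff)
  have "A (Suc n) + D (Suc n) = lam + inverse lam"
    by (simp add: A_Suc D_Suc)
  then have "A (Suc n) \<noteq> 0 \<or> D (Suc n) \<noteq> 0"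
    using trace_nonzero by auto
  moreover have "B (Suc n) \<noteq> 0" "C (Suc n) \<noteq> 0"
    using BC1 by auto
  ultimately have "\<not> (B (Suc (Suc n)) = 0 \<and> C (Suc (Suc n)) = 0)"
    using mu_nonzero by (auto simp: B_Suc C_Suc)
  moreover have "B (Suc (Suc n)) * C (Suc (Suc n)) = 0"
    using BC_Suc[of "Suc n"] n by simp
  moreover have "A (Suc (Suc n)) = inverse lam" "D (Suc (Suc n)) = lam"
    using BC1 by (simp_all add: A_Suc D_Suc mu_eq)
  ultimately show ?thesis by blast
qed

context
  assumes contracting: "rate < 1"
begin

lemma norm_mu_sq_le_rate: "cmod mu ^ 2 \<le> rate"
  unfolding rate_def by (simp add: norm_power mult_left_le_one_le) (simp add: mult_le_cancel_left1)

lemma rate_pos: "0 < rate"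
  using norm_mu_sq_le_rate mu_nonzero by (meson order_less_le_trans zero_less_norm_iff zero_less_power)

lemma norm_mu_lt_1: "cmod mu < 1"
  using norm_mu_sq_le_rate contracting
  by (metis le_less_trans power_less_imp_less_base one_power2 zero_le_one)

lemma norm_BC_mu_le: "cmod (B n * C n * mu) \<le> cmod (B n * C n)"
  using norm_mu_lt_1 by (simp add: norm_mult mult_left_le)

lemma BC_geometric: "\<exists>Q. \<forall>n. cmod (B n * C n) \<le> Q * rate^n"
proof -
  define z where "z n = entry_product n * mu^2" for n
  have "z (Suc n) = - (mu^2) * z n * (1 - z n)" for n
    using entry_product_eq[of "Suc n", unfolded BC_Suc] unfolding z_def by algebra
  moreover have "rate = cmod (mu^2) * (1 + cmod (z 0))"
    by (simp add: rate_def z_def)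
  ultimately have decay: "cmod (z n) \<le> cmod (z 0) * rate^n" for n
    using logistic_iteration_decay[of z "mu^2" n] contracting by simp
  define Q where "Q = cmod (B 0 * C 0) + cmod (z 0) / rate"
  have "cmod (B n * C n) \<le> Q * rate^n" for n
  proof (cases n)
    case 0
    then show ?thesis using rate_pos by (simp add: Q_def)
  next
    case (Suc k)
    have "cmod (B n * C n) = cmod (z k)"
      by (simp add: Suc BC_Suc z_def)
    also have "\<dots> \<le> cmod (z 0) / rate * rate^n"
      using decay[of k] rate_pos by (simp add: Suc)
    also have "\<dots> \<le> Q * rate^n"
      using rate_pos by (intro mult_right_mono) (simp_all add: Q_def)
    finally show ?thesis .
  qed
  then show ?thesis by blast
qed

lemma BC_sum_bounded: "\<exists>T. \<forall>n. (\<Sum>k<n. cmod (B k * C k)) \<le> T"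
proof -
  obtain Q where Q: "\<And>n. cmod (B n * C n) \<le> Q * rate^n"
    using BC_geometric by blast
  have "Q \<ge> 0"
    by (metis Q mult.right_neutral norm_ge_zero order_trans power_0)
  have "(\<Sum>k<n. cmod (B k * C k)) \<le> Q / (1 - rate)" for n
  proof -
    have "(\<Sum>k<n. cmod (B k * C k)) \<le> (\<Sum>k<n. Q * rate^k)"
      by (intro sum_mono Q)
    also have "\<dots> = Q * (1 - rate^n) / (1 - rate)"
      using contracting by (simp add: sum_distrib_left[symmetric] sum_gp_strict)
    also have "\<dots> \<le> Q / (1 - rate)"
      using contracting rate_pos \<open>Q \<ge> 0\<close> by (intro divide_right_mono) (auto simp: mult_left_le)
    finally show ?thesis .
  qed
  then show ?thesis by blast
qed

lemma AD_geometric: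
  "\<exists>Q. \<forall>n. cmod (A (Suc n) - lam) + cmod (D (Suc n) - inverse lam) \<le> Q * rate^n"
proof -
  obtain Q where Q: "\<And>n. cmod (B n * C n) \<le> Q * rate^n"
    using BC_geometric by blast
  have "cmod (B n * C n * mu) \<le> Q * rate^n" for n
    using Q[of n] norm_BC_mu_le[of n] by linarith
  then have "cmod (A (Suc n) - lam) + cmod (D (Suc n) - inverse lam) \<le> (2 * Q) * rate^n" for n
    by (simp add: A_Suc D_Suc)
  then show ?thesis by blast
qed

lemma norm_A_Suc_le: "cmod (A (Suc n)) \<le> cmod lam * exp (cmod (B n * C n))"
proof -
  let ?x = "cmod (B n * C n)"
  have "cmod (A (Suc n)) \<le> cmod lam + ?x"
    using norm_triangle_ineq[of lam "B n * C n * mu"] norm_BC_mu_le[of n] by (simp add: A_Suc)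
  also have "\<dots> \<le> cmod lam * (1 + ?x)"
    using lam_gt_1 mult_right_mono[of 1 "cmod lam" ?x] by (simp add: distrib_left)
  also have "\<dots> \<le> cmod lam * exp ?x"
    by (intro mult_left_mono) (simp_all add: exp_ge_add_one_self)
  finally show ?thesis .
qed

lemma norm_D_Suc_le: "cmod (D (Suc n)) \<le> exp (cmod lam * cmod (B n * C n)) / cmod lam"
proof -
  let ?x = "cmod (B n * C n)"
  have "cmod (D (Suc n)) \<le> 1 / cmod lam + ?x"
    using norm_triangle_ineq4[of "inverse lam" "B n * C n * mu"] norm_BC_mu_le[of n]
    using lam_nonzero by (simp add: D_Suc norm_inverse divide_inverse)
  also have "\<dots> = (1 + cmod lam * ?x) / cmod lam"
    using lam_nonzero by (simp add: add_divide_distrib)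
  also have "\<dots> \<le> exp (cmod lam * ?x) / cmod lam"
    using lam_gt_1 by (intro divide_right_mono) (simp_all add: exp_ge_add_one_self)
  finally show ?thesis .
qed

lemma B_scaled_geometric: "\<exists>K. \<forall>n. cmod (inverse lam ^ n * B (Suc n)) \<le> K * cmod mu ^ n"
proof -
  obtain T where T: "\<And>n. (\<Sum>k<n. cmod (B k * C k)) \<le> T"
    using BC_sum_bounded by blast
  have "cmod (B (Suc (Suc n))) \<le> (cmod lam * cmod mu) * exp (cmod (B n * C n)) * cmod (B (Suc n))" for n
    using mult_right_mono[OF norm_A_Suc_le[of n], of "cmod mu * cmod (B (Suc n))"]
    by (simp add: B_Suc[of "Suc n"] norm_mult mult_ac)
  then have growth: "cmod (B (Suc n)) \<le> cmod (B 1) * (cmod lam * cmod mu)^n * exp (\<Sum>k<n. cmod (B k * C k))" for n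
    using norm_le_power_mult_exp_sum[of "cmod lam * cmod mu" "\<lambda>n. B (Suc n)"] by simp
  have "cmod (inverse lam ^ n * B (Suc n)) \<le> (cmod (B 1) * exp T) * cmod mu ^ n" for n
  proof -
    have "cmod (inverse lam ^ n * B (Suc n)) = cmod (B (Suc n)) / cmod lam ^ n"
      by (simp add: norm_mult norm_power norm_inverse divide_inverse power_inverse)
    also have "\<dots> \<le> cmod (B 1) * cmod mu ^ n * exp (\<Sum>k<n. cmod (B k * C k))"
      using growth[of n] lam_gt_1 by (simp add: divide_le_eq power_mult_distrib mult_ac)
    also have "\<dots> \<le> cmod (B 1) * cmod mu ^ n * exp T"
      using T[of n] by (intro mult_left_mono) simp_all
    also have "\<dots> = (cmod (B 1) * exp T) * cmod mu ^ n"
      by (simp add: mult_ac)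
    finally show ?thesis .
  qed
  then show ?thesis by blast
qed

lemma C_scaled_geometric: "\<exists>K. \<forall>n. cmod (lam ^ n * C (Suc n)) \<le> K * cmod mu ^ n"
proof -
  obtain T where T: "\<And>n. (\<Sum>k<n. cmod (B k * C k)) \<le> T"
    using BC_sum_bounded by blast
  have "cmod (C (Suc (Suc n))) \<le> (cmod mu / cmod lam) * exp (cmod lam * cmod (B n * C n)) * cmod (C (Suc n))" for n
    using mult_right_mono[OF norm_D_Suc_le[of n], of "cmod mu * cmod (C (Suc n))"]
    by (simp add: C_Suc[of "Suc n"] norm_mult mult_ac)
  then have growth: "cmod (C (Suc n)) \<le> cmod (C 1) * (cmod mu / cmod lam)^n * exp (\<Sum>k<n. cmod lam * cmod (B k * C k))" for n
    using norm_le_power_mult_exp_sum[of "cmod mu / cmod lam" "\<lambda>n. C (Suc n)"] by simp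
  have "cmod (lam ^ n * C (Suc n)) \<le> (cmod (C 1) * exp (cmod lam * T)) * cmod mu ^ n" for n
  proof -
    have "cmod (lam ^ n * C (Suc n)) = cmod lam ^ n * cmod (C (Suc n))"
      by (simp add: norm_mult norm_power)
    also have "\<dots> \<le> cmod lam ^ n * (cmod (C 1) * (cmod mu / cmod lam)^n * exp (\<Sum>k<n. cmod lam * cmod (B k * C k)))"
      using growth[of n] by (simp add: mult_left_mono)
    also have "\<dots> = cmod (C 1) * cmod mu ^ n * exp (cmod lam * (\<Sum>k<n. cmod (B k * C k)))"
      using lam_nonzero by (simp add: sum_distrib_left power_divide)
    also have "\<dots> \<le> cmod (C 1) * cmod mu ^ n * exp (cmod lam * T)"
      using T[of n] lam_gt_1 by (intro mult_left_mono) (simp_all add: mult_left_mono)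
    also have "\<dots> = (cmod (C 1) * exp (cmod lam * T)) * cmod mu ^ n"
      by (simp add: mult_ac)
    finally show ?thesis .
  qed
  then show ?thesis by blast
qed

lemma odd_orbit_conj_geometric:
  "\<exists>K. \<forall>n. cmod (A (2*n+1) - lam) + cmod (inverse lam ^ (2*n) * B (2*n+1))
          + cmod (lam ^ (2*n) * C (2*n+1)) + cmod (D (2*n+1) - inverse lam) \<le> K * rate^n"
proof -
  obtain Q where Q: "\<And>n. cmod (A (Suc n) - lam) + cmod (D (Suc n) - inverse lam) \<le> Q * rate^n"
    using AD_geometric by blast
  obtain KB where KB: "\<And>n. cmod (inverse lam ^ n * B (Suc n)) \<le> KB * cmod mu ^ n"
    using B_scaled_geometric by blast
  obtain KC where KC: "\<And>n. cmod (lam ^ n * C (Suc n)) \<le> KC * cmod mu ^ n"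
    using C_scaled_geometric by blast
  have "Q \<ge> 0"
    using order_trans[OF add_nonneg_nonneg[OF norm_ge_zero norm_ge_zero] Q[of 0]] by simp
  have "KB \<ge> 0"
    using order_trans[OF norm_ge_zero KB[of 0]] by simp
  have "KC \<ge> 0"
    using order_trans[OF norm_ge_zero KC[of 0]] by simp
  have "rate^(2*n) \<le> rate^n" for n
    using rate_pos contracting by (intro power_decreasing) auto
  moreover have "cmod mu ^ (2*n) \<le> rate^n" for n
    using norm_mu_sq_le_rate by (simp add: power_mult power_mono)
  ultimately have
"cmod (A (2*n+1) - lam) + cmod (inverse lam ^ (2*n) * B (2*n+1))
          + cmod (lam ^ (2*n) * C (2*n+1)) + cmod (D (2*n+1) - inverse lam) \<le> (Q + KB + KC) * rate^n" for n
    using Q[of "2*n"] KB[of "2*n"] KC[of "2*n"] \<open>Q \<ge> 0\<close> \<open>KB \<ge> 0\<close> \<open>KC \<ge> 0\<close>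
      mult_left_mono[of "rate^(2*n)" "rate^n" Q] mult_left_mono[of "cmod mu ^ (2*n)" "rate^n" KB]
      mult_left_mono[of "cmod mu ^ (2*n)" "rate^n" KC]
    by (simp add: algebra_simps)
  then show ?thesis by blast
qed

end

end

lemma gen_subgroup_diag2_not_discrete:
  fixes lam a b c d :: complex
  defines "mu \<equiv> lam - inverse lam"
  assumes lam: "cmod lam > 1" and det: "a*d - b*c = 1" and "a*b*c*d \<noteq> 0"
    and small: "cmod mu ^ 2 * (1 + cmod (a*b*c*d) * cmod mu ^ 2) < 1"
  shows "\<not> discrete_group (gen_subgroup {diag2 lam, mat2 a b c d})"
proof
  let ?G = "gen_subgroup {diag2 lam, mat2 a b c d}"
  define H where "H = conj_orbit (diag2 lam) (mat2 a b c d)"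
  assume disc: "discrete_group ?G"
  interpret conj_orbit_entries lam mu "\<lambda>n. H n$1$1" "\<lambda>n. H n$1$2" "\<lambda>n. H n$2$1" "\<lambda>n. H n$2$2"
    using conj_orbit_entries_diag2[OF lam, of "mat2 a b c d"] det by (simp add: H_def mu_def det_mat2)
  have H: "H n = mat2 (H n$1$1) (H n$1$2) (H n$2$1) (H n$2$2)" for n
    by (rule mat2_eta)
  have g: "diag2 lam \<in> ?G" and HG: "H n \<in> ?G" for n
    unfolding H_def by (auto intro: gen_base conj_orbit_in_gen_subgroup)
  have Y0: "entry_product 0 = a*b*c*d"
    using entry_product_def[of 0] by (simp add: H_def)
  show False
  proof (cases "\<exists>N. entry_product N = 0")
    case True
    then obtain N where "entry_product N = 0" by blast
    then obtain k where "H k$1$1 = inverse lam" "H k$2$2 = lam" "H k$1$2 * H k$2$1 = 0"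
        and "\<not> (H k$1$2 = 0 \<and> H k$2$1 = 0)"
      using orbit_becomes_triangular[of N] Y0 \<open>a*b*c*d \<noteq> 0\<close> by auto
    then show False
      using discrete_triangular_is_diagonal[OF disc lam g]
        HG[of k] H[of k] by metis
  next
    case False
    have "rate < 1"
      using small by (simp add: rate_def Y0 norm_mult norm_power)
    then obtain K where K: "\<And>n. cmod (H (2*n+1)$1$1 - lam) + cmod (inverse lam ^ (2*n) * H (2*n+1)$1$2)
          + cmod (lam ^ (2*n) * H (2*n+1)$2$1) + cmod (H (2*n+1)$2$2 - inverse lam) \<le> K * rate^n"
      using odd_orbit_conj_geometric by blast
    define S where "S n = diag2 (inverse lam ^ n) ** H (2*n+1) ** diag2 (lam ^ n)" for n
    have S: "S n = mat2 (H (2*n+1)$1$1) (inverse lam ^ (2*n) * H (2*n+1)$1$2)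
                        (lam ^ (2*n) * H (2*n+1)$2$1) (H (2*n+1)$2$2)" for n
      using diag2_conj[of "inverse lam ^ n" "H (2*n+1)"] lam_nonzero
      by (simp add: S_def power_mult power_inverse mult.commute)
    have "S n \<in> ?G" for n
      using diag2_power_conj_in_gen_subgroup[of "inverse lam"] gen_inv[OF g] HG lam_nonzero
      by (simp add: S_def matrix_inv_diag2)
    moreover have "S n \<noteq> diag2 lam" for n
      using BC_Suc[of "2*n"] False mu_nonzero lam_nonzero by (auto simp: S diag2_def mat2_eq_iff)
    moreover have "dist (S n) (diag2 lam) \<le> K * rate^n" for n
      using dist_mat2_le[of _ _ _ _ lam 0 0 "inverse lam"] K[of n] unfolding S diag2_def
      by (smt (verit) diff_zero)
    ultimately show False
      using discrete_group_no_geometric_approach[OF disc g] \<open>rate < 1\<close> by blast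
  qed
qed

lemma sq_mult_one_add_lt_1:
  fixes m M z :: real
  assumes "0 \<le> m" "m \<le> M" "0 < M" "M < 1" "0 \<le> z" "sqrt z \<le> (1 - M) / M^2"
  shows "m^2 * (1 + z * m^2) < 1"
proof -
  have "z \<le> ((1 - M) / M^2)^2"
    using assms(5,6) by (metis real_sqrt_le_iff real_sqrt_pow2 power2_le_iff_abs_le
        abs_of_nonneg real_sqrt_ge_zero order_trans)
  then have "z * (M^2)^2 \<le> (1 - M)^2"
    using assms(3) by (simp add: power_divide pos_le_divide_eq)
  have "m^2 * (1 + z * m^2) = m^2 + z * (m^2)^2"
    by (simp add: algebra_simps power2_eq_square)
  also have "\<dots> \<le> M^2 + z * (M^2)^2"
    using assms(1,2,5) by (intro add_mono mult_left_mono power_mono) auto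
  also have "\<dots> \<le> M^2 + (1 - M)^2"
    using \<open>z * (M^2)^2 \<le> (1 - M)^2\<close> by simp
  also have "\<dots> < 1"
    using assms(3,4) by (simp add: power2_eq_square algebra_simps)
  finally show ?thesis .
qed

theorem theorem1:
  fixes lam a b c d :: complex
  assumes "cmod lam > 1"
    and "mat2 a b c d \<in> SL2C"
    and "cmod (lam - 1) + cmod (inverse lam - 1) < 1"
    and "discrete_group (gen_subgroup {mat2 lam 0 0 (inverse lam), mat2 a b c d})"
    and "\<not> elementary (gen_subgroup {mat2 lam 0 0 (inverse lam), mat2 a b c d})"
  shows "sqrt (cmod (a*b*c*d)) \<noteq>
           (1 - (cmod (lam - 1) + cmod (inverse lam - 1))) /
             (cmod (lam - 1) + cmod (inverse lam - 1))\<^sup>2"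
proof
  define M where "M = cmod (lam - 1) + cmod (inverse lam - 1)"
  assume eq: "sqrt (cmod (a*b*c*d)) = (1 - M) / M\<^sup>2"
  have "cmod (lam - inverse lam) \<le> M"
    using norm_triangle_ineq4[of "lam - 1" "inverse lam - 1"] by (simp add: M_def)
  moreover have "0 < M"
    using assms(1) by (auto simp: M_def intro!: add_pos_nonneg)
  moreover have "M < 1"
    using assms(3) by (simp add: M_def)
  ultimately have "cmod (lam - inverse lam) ^ 2 * (1 + cmod (a*b*c*d) * cmod (lam - inverse lam) ^ 2) < 1"
    using eq by (intro sq_mult_one_add_lt_1) auto
  moreover have "a*b*c*d \<noteq> 0"
    using eq \<open>0 < M\<close> \<open>M < 1\<close> by auto
  moreover have "a*d - b*c = 1"
    using assms(2) by (simp add: SL2C_def det_mat2)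
  ultimately show False
    using gen_subgroup_diag2_not_discrete[OF assms(1)] assms(4) by (simp add: diag2_def)
qed

end
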